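(* For every $R>1$ there exists $a^+=a^+(R)>0$ such that for every $0<l\le+\infty$ and every annulus $A\subset Z(0,l)$ of conformal radius $R$ adjacent to the boundary circle $\partial_0Z=S^1\times\{0\}$, one has $Z(0,a^+)\subset A$.
   Context: $Z(0,l)=S^1\times[0,l]$ (or $S^1\times[0,\infty)$ for $l=\infty$) with coordinates $\theta,t$ and complex structure $J(\partial_\theta)=\partial_t$; $Z(0,a)=S^1\times[0,a]$. An annulus in a complex curve is a domain biholomorphic to $\{r<|z|<R'\}$ whose boundary consists of smooth circles; it has conformal radius $R$ if biholomorphic to $\{1<|z|<R\}$, and is adjacent to a circle if that circle is one of its boundary components. *)

theory Defs
  imports "HOL-Complex_Analysis.Complex_Analysis" "HOL-Library.Extended_Real"
begin

text \<open>The half-infinite cylinder S^1 x [0,oo) with coordinates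
(theta,t), theta in R/2piZ, and complex structure J(d/dtheta) = d/dt has holomorphic
coordinate w = theta + i t; the map w |-> exp(i w) = e^{-t} e^{i theta} is a biholomorphism
onto the punctured closed unit disc.  We identify Z(0,l) with its image:
the boundary circle t = 0 becomes the unit circle.\<close>

definition cyl_Z :: "ereal \<Rightarrow> complex set" where
  "cyl_Z l = {exp (\<i> * (complex_of_real \<theta> + \<i> * complex_of_real t)) | \<theta> t.
                 0 \<le> t \<and> ereal t \<le> l}"

definition boundary0 :: "complex set" where
  "boundary0 = {exp (\<i> * complex_of_real \<theta>) | \<theta>. True}"

definition ring :: "real \<Rightarrow> real \<Rightarrow> complex set" where
  "ring r R = {z. r < norm z \<and> norm z < R}"

definition biholomorphic :: "complex set \<Rightarrow> complex set \<Rightarrow> bool" where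
  "biholomorphic U V \<longleftrightarrow> (\<exists>f g. f holomorphic_on U \<and> g holomorphic_on V \<and>
      f ` U = V \<and> g ` V = U \<and> (\<forall>z\<in>U. g (f z) = z) \<and> (\<forall>w\<in>V. f (g w) = w))"

definition vderiv_iter :: "nat \<Rightarrow> (real \<Rightarrow> complex) \<Rightarrow> real \<Rightarrow> complex" where
  "vderiv_iter n \<gamma> = ((\<lambda>g t. vector_derivative g (at t)) ^^ n) \<gamma>"

definition smooth_circle :: "complex set \<Rightarrow> bool" where
  "smooth_circle C \<longleftrightarrow> (\<exists>\<gamma>::real \<Rightarrow> complex.
      (\<forall>t. \<gamma> (t + 1) = \<gamma> t) \<and> inj_on \<gamma> {0..<1} \<and>
      (\<forall>n t. vderiv_iter n \<gamma> differentiable (at t)) \<and>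
      (\<forall>t. vector_derivative \<gamma> (at t) \<noteq> 0) \<and> C = range \<gamma>)"

definition is_annulus :: "complex set \<Rightarrow> bool" where
  "is_annulus A \<longleftrightarrow> open A \<and> connected A \<and>
     (\<exists>r R'. 0 < r \<and> r < R' \<and> biholomorphic A (ring r R')) \<and>
     (\<forall>C \<in> components (frontier A). smooth_circle C)"

definition has_conformal_radius :: "complex set \<Rightarrow> real \<Rightarrow> bool" where
  "has_conformal_radius A R \<longleftrightarrow> is_annulus A \<and> biholomorphic A (ring 1 R)"

definition adjacent :: "complex set \<Rightarrow> complex set \<Rightarrow> bool" where
  "adjacent A C \<longleftrightarrow> C \<in> components (frontier A)"

end

theory Submission
  imports Defs
begin

text \<open>Let \<open>\<phi>\<close> map the round ring \<open>1 < |z| < R\<close> biholomorphically onto \<open>A\<close>, and let \<open>\<Gamma>\<close> be the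
  image of the middle circle \<open>|z| = exp (ln R / 2)\<close>.  The frontier of \<open>A\<close> is the union of the
  cluster sets of the two ends of the ring, which are closed and connected.  Since the unit
  circle is a component of the frontier, all frontier points inside the disc lie in a single
  connected set, so \<open>\<Gamma>\<close> has the same winding number around every point of the disc outside
  \<open>A\<close>; this number is nonzero because \<open>\<phi>\<^sup>-\<^sup>1\<close> maps \<open>\<Gamma>\<close> back onto the circle.

  In particular \<open>\<Gamma>\<close> winds around \<open>0 \<notin> A\<close>, so a logarithm \<open>G\<close> of \<open>\<phi> \<circ> exp\<close> on the strip
  \<open>0 < Re w < ln R\<close> has negative real part and satisfies \<open>|G (w + 2\<pi>i) - G w| \<ge> 2\<pi>\<close>.  The
  Schwarz lemma, transported to the strip, turns this jump into an upper bound
  \<open>core_radius R < 1\<close> for \<open>|\<phi>|\<close> on the middle circle.  Hence \<open>\<Gamma>\<close> lies in the disc of that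
  radius and winds around no point outside it, so the ring \<open>core_radius R < |z| < 1\<close>,
  which contains \<open>Z(0,a)\<close> minus its boundary circle for small \<open>a\<close>, lies in \<open>A\<close>.\<close>

lemma open_ring: "open (ring r R)"
  unfolding ring_def by (intro open_Collect_conj open_Collect_less continuous_intros)

lemma connected_ring: "connected (ring r R)"
  using connected_annulus(1)[where a = "0::complex"] by (simp add: ring_def)

lemma exp_half_ln_bounds:
  assumes "R > (1::real)"
  shows "1 < exp (ln R / 2)" "exp (ln R / 2) < R"
  using assms exp_less_mono[of "ln R / 2" "ln R"] by auto

lemma exp_in_ring:
  assumes "R > 0" "0 < Re w" "Re w < ln R"
  shows "exp w \<in> ring 1 R"
proof -
  have "exp 0 < exp (Re w)" "exp (Re w) < exp (ln R)"
    using assms(2,3) by (simp_all only: exp_less_cancel_iff)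
  then show ?thesis
    using assms(1) by (simp add: ring_def)
qed

lemma ring_map_circlepath:
  assumes "continuous_on (ring 1 R) \<phi>" "1 < r" "r < R"
  shows "path (\<phi> \<circ> circlepath 0 r)"
    and "pathfinish (\<phi> \<circ> circlepath 0 r) = pathstart (\<phi> \<circ> circlepath 0 r)"
    and "path_image (\<phi> \<circ> circlepath 0 r) = \<phi> ` sphere 0 r"
proof -
  have "path_image (circlepath 0 r) \<subseteq> ring 1 R"
    using assms(2,3) by (auto simp: ring_def)
  then show "path (\<phi> \<circ> circlepath 0 r)"
    using assms(1) by (intro path_continuous_image path_circlepath) (auto intro: continuous_on_subset)
  show "pathfinish (\<phi> \<circ> circlepath 0 r) = pathstart (\<phi> \<circ> circlepath 0 r)"
    by (simp add: pathfinish_compose pathstart_compose)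
  show "path_image (\<phi> \<circ> circlepath 0 r) = \<phi> ` sphere 0 r"
    using assms(2) by (simp add: path_image_compose)
qed

lemma convex_vertical_strip: "convex {w. a < Re w \<and> Re w < b}"
  by (simp add: Collect_conj_eq convex_Int convex_halfspace_Re_gt convex_halfspace_Re_lt)

lemma open_vertical_strip: "open {w. a < Re w \<and> Re w < b}"
  by (simp add: Collect_conj_eq open_Int open_halfspace_Re_gt open_halfspace_Re_lt)

section \<open>Logarithms and winding numbers\<close>

lemma exp_eq_imp_diff_constant_on:
  fixes f g :: "'a::topological_space \<Rightarrow> complex"
  assumes "connected S" "continuous_on S f" "continuous_on S g"
    and "\<And>x. x \<in> S \<Longrightarrow> exp (f x) = exp (g x)"
  shows "(\<lambda>x. f x - g x) constant_on S"
proof (rule continuous_discrete_range_constant[OF assms(1)])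
  show "continuous_on S (\<lambda>x. f x - g x)"
    using assms by (intro continuous_intros)
  have multiple: "\<exists>n::int. f x - g x = of_int n * (2 * pi * \<i>)" if "x \<in> S" for x
    using assms(4)[OF that] by (auto simp: exp_eq algebra_simps)
  have gap: "1 \<le> norm ((f y - g y) - (f x - g x))"
    if xy: "x \<in> S" "y \<in> S" and ne: "f y - g y \<noteq> f x - g x" for x y
  proof -
    obtain m n :: int where mn: "f x - g x = of_int n * (2 * pi * \<i>)" "f y - g y = of_int m * (2 * pi * \<i>)"
      using multiple xy by metis
    then have "m \<noteq> n"
      using ne by auto
    have "norm ((f y - g y) - (f x - g x)) = \<bar>real_of_int (m - n)\<bar> * (2 * pi)"
      unfolding mn by (simp add: left_diff_distrib[symmetric] norm_mult flip: of_int_diff)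
    also have "\<dots> \<ge> 1 * (2 * pi)"
      using \<open>m \<noteq> n\<close> by (intro mult_right_mono) auto
    finally show ?thesis
      using pi_gt3 by linarith
  qed
  fix x assume "x \<in> S"
  then show "\<exists>e>0. \<forall>y. y \<in> S \<and> f y - g y \<noteq> f x - g x \<longrightarrow> e \<le> norm (f y - g y - (f x - g x))"
    using gap by (intro exI[of _ 1]) auto
qed

lemma continuous_log_winding_number:
  assumes p: "path p" "0 \<notin> path_image p" and q: "continuous_on {0..1} q"
    and exp_q: "\<And>t. t \<in> {0..1} \<Longrightarrow> exp (q t) = p t"
  shows "q 1 - q 0 = 2 * pi * \<i> * winding_number p 0"
proof -
  obtain q' where q': "path q'" "pathfinish q' - pathstart q' = 2 * of_real pi * \<i> * winding_number p 0"
    and exp_q': "\<And>t. t \<in> {0..1} \<Longrightarrow> p t = 0 + exp (q' t)"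
    using winding_number_as_continuous_log[OF p] by blast
  have "(\<lambda>t. q t - q' t) constant_on {0..1}"
    using q q'(1) exp_q exp_q' by (intro exp_eq_imp_diff_constant_on) (auto simp: path_def)
  then have "q 1 - q' 1 = q 0 - q' 0"
    by (auto simp: constant_on_def)
  with q'(2) show ?thesis
    by (simp add: pathstart_def pathfinish_def algebra_simps)
qed

lemma norm_winding_number_ge_1:
  assumes "path \<gamma>" "pathfinish \<gamma> = pathstart \<gamma>" "z \<notin> path_image \<gamma>" "winding_number \<gamma> z \<noteq> 0"
  shows "1 \<le> norm (winding_number \<gamma> z)"
  using integer_winding_number[OF assms(1-3)] assms(4) by (auto elim!: Ints_cases)

lemma exists_winding_number_nonzero_outside:
  assumes A: "open A" and hol: "f holomorphic_on A" and nz: "\<And>w. w \<in> A \<Longrightarrow> f w \<noteq> 0"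
    and \<gamma>: "valid_path \<gamma>" "pathfinish \<gamma> = pathstart \<gamma>" "path_image \<gamma> \<subseteq> A"
    and wn: "winding_number (f \<circ> \<gamma>) 0 \<noteq> 0"
  obtains w where "w \<notin> A" "winding_number \<gamma> w \<noteq> 0"
proof (rule ccontr)
  assume "\<not> thesis"
  with that have zero: "\<And>w. w \<notin> A \<Longrightarrow> winding_number \<gamma> w = 0" by blast
  have "(\<lambda>w. deriv f w / f w) holomorphic_on A"
    using hol A nz by (intro holomorphic_intros holomorphic_deriv)
  then have "((\<lambda>w. deriv f w / f w) has_contour_integral 0) \<gamma>"
    using Cauchy_theorem_global[OF A _ \<gamma> zero] by blast
  moreover have "contour_integral (f \<circ> \<gamma>) (\<lambda>w. 1 / (w - 0)) = contour_integral \<gamma> (\<lambda>w. deriv f w / f w)"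
    using contour_integral_comp_analyticW[OF _ \<gamma>(1,3)] hol A by (simp add: analytic_on_open divide_inverse)
  moreover have "winding_number (f \<circ> \<gamma>) 0 = 1 / (2 * pi * \<i>) * contour_integral (f \<circ> \<gamma>) (\<lambda>w. 1 / (w - 0))"
    using \<gamma> nz by (intro winding_number_valid_path valid_path_compose_holomorphic[OF \<gamma>(1) hol A])
      (auto simp: path_image_compose)
  ultimately show False
    using wn contour_integral_unique by fastforce
qed

lemma winding_number_eq_at_frontier_point:
  fixes \<gamma> :: "real \<Rightarrow> complex"
  assumes \<gamma>: "path \<gamma>" "pathfinish \<gamma> = pathstart \<gamma>" "path_image \<gamma> \<subseteq> A"
    and A: "open A" "A \<subseteq> B" and B: "convex B" and x: "x \<in> B" "x \<notin> A"
  obtains y where "y \<in> frontier A" "y \<in> B" "winding_number \<gamma> x = winding_number \<gamma> y"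
proof -
  obtain a where a: "a \<in> A"
    using \<gamma>(3) path_image_nonempty by blast
  obtain h where h: "path h" "pathstart h = x" "path_image h \<subseteq> closed_segment x a \<inter> - A"
    "pathfinish h \<in> frontier (- A)"
    using exists_path_subpath_to_frontier_closed[of "- A" "linepath x a"] A(1) a x(2) by auto
  have "path_image h \<subseteq> B"
    using h(3) closed_segment_subset[OF x(1) _ B] a A(2) by blast
  moreover have "winding_number \<gamma> constant_on path_image h"
    using h(3) \<gamma> by (intro winding_number_constant connected_path_image h(1)) auto
  ultimately show ?thesis
    using that h(2,4) pathstart_in_path_image pathfinish_in_path_image
    by (metis constant_on_def frontier_complement subsetD)
qed

section \<open>The Schwarz lemma on a strip\<close>

lemma norm_diff_less_norm_add_cnj:
  fixes w u :: complex
  assumes "Re w < 0" "Re u < 0"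
  shows "norm (w - u) < norm (w + cnj u)"
proof -
  have "(norm (w - u))\<^sup>2 < (norm (w + cnj u))\<^sup>2"
    using assms unfolding cmod_power2 by (simp add: power2_eq_square algebra_simps mult_neg_neg)
  then show ?thesis
    by (simp add: power2_less_imp_less)
qed

lemma Schwarz_Lemma_left_halfplane:
  fixes h :: "complex \<Rightarrow> complex"
  assumes hol: "h holomorphic_on ball 0 1" and neg: "\<And>z. norm z < 1 \<Longrightarrow> Re (h z) < 0"
    and z: "norm z < 1"
  shows "norm (h z - h 0) \<le> norm z * norm (h z + cnj (h 0))"
proof -
  have den: "h w + cnj (h 0) \<noteq> 0" if "norm w < 1" for w
    using neg[OF that] neg[of 0] by (auto simp: complex_eq_iff)
  define g where "g w = (h w - h 0) / (h w + cnj (h 0))" for w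
  have "g holomorphic_on ball 0 1"
    unfolding g_def using hol den by (intro holomorphic_intros) auto
  moreover have "norm (g w) < 1" if "norm w < 1" for w
    using norm_diff_less_norm_add_cnj[OF neg[OF that] neg[of 0]] den[OF that]
    by (simp add: g_def norm_divide divide_less_eq)
  ultimately have "norm (g z) \<le> norm z"
    using Schwarz_Lemma(1)[of g z] z by (simp add: g_def)
  then show ?thesis
    using den[OF z] by (simp add: g_def norm_divide divide_le_eq)
qed

text \<open>The Cayley transform maps the unit disc onto the upper half plane, on which \<open>Ln\<close>
  takes values in the horizontal strip of height \<open>pi\<close>; rotating and rescaling gives a
  conformal map of the disc onto the vertical strip of width \<open>L\<close> centred at \<open>Re \<zeta>\<close>,
  sending \<open>0\<close> to \<open>\<zeta>\<close> and the real diameter to the vertical line through \<open>\<zeta>\<close>.\<close>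

definition strip_chart :: "real \<Rightarrow> complex \<Rightarrow> complex \<Rightarrow> complex" where
  "strip_chart L \<zeta> z = \<zeta> - of_real (L / 2) - \<i> * of_real (L / pi) * Ln (\<i> * ((1 + z) / (1 - z)))"

lemma Im_Cayley_pos:
  fixes z :: complex
  assumes "norm z < 1"
  shows "0 < Im (\<i> * ((1 + z) / (1 - z)))"
proof -
  have "(Re z)\<^sup>2 + (Im z)\<^sup>2 < 1"
    using assms by (simp flip: cmod_power2 add: power_less_one_iff)
  moreover have "(Re (1 - z))\<^sup>2 + (Im (1 - z))\<^sup>2 > 0"
    using assms complex_neq_0[of "1 - z"] by auto
  moreover have "Im (\<i> * ((1 + z) / (1 - z))) =
      (1 - (Re z)\<^sup>2 - (Im z)\<^sup>2) / ((Re (1 - z))\<^sup>2 + (Im (1 - z))\<^sup>2)"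
    unfolding Im_i_times by (simp add: Re_divide power2_eq_square algebra_simps)
  ultimately show ?thesis
    by simp
qed

lemma strip_chart_in_strip:
  assumes "L > 0" "norm z < 1"
  shows "Re \<zeta> - L / 2 < Re (strip_chart L \<zeta> z) \<and> Re (strip_chart L \<zeta> z) < Re \<zeta> + L / 2"
proof -
  define Y where "Y = Im (Ln (\<i> * ((1 + z) / (1 - z))))"
  have Y: "0 < Y" "Y < pi"
    using Im_Ln_pos_lt_imp[OF Im_Cayley_pos[OF assms(2)]] by (auto simp: Y_def)
  have "L / pi * Y < L / pi * pi"
    using Y assms(1) by (intro mult_strict_left_mono) auto
  moreover have "Re (strip_chart L \<zeta> z) = Re \<zeta> - L / 2 + L / pi * Y"
    by (simp add: strip_chart_def Y_def)
  ultimately show ?thesis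
    using Y assms(1) by auto
qed

lemma holomorphic_strip_chart: "strip_chart L \<zeta> holomorphic_on ball 0 1"
  unfolding strip_chart_def
proof (intro holomorphic_intros)
  fix z :: complex
  assume "z \<in> ball 0 1"
  then have "norm z < 1" by simp
  then show "1 - z \<noteq> 0" "\<i> * ((1 + z) / (1 - z)) \<notin> \<real>\<^sub>\<le>\<^sub>0"
    using Im_Cayley_pos[of z] by (auto simp: complex_nonpos_Reals_iff)
qed

lemma strip_chart_0 [simp]: "strip_chart L \<zeta> 0 = \<zeta>"
  by (simp add: strip_chart_def mult.left_commute)

lemma strip_chart_of_real:
  assumes "\<bar>x\<bar> < 1"
  shows "strip_chart L \<zeta> (of_real x) = \<zeta> - \<i> * of_real (2 * L / pi * artanh x)"
proof -
  define r where "r = (1 + x) / (1 - x)"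
  have r: "r > 0"
    using assms by (simp add: r_def)
  have "(1 + complex_of_real x) / (1 - complex_of_real x) = of_real r"
    by (simp add: r_def)
  moreover have "Ln (\<i> * of_real r) = of_real (ln r) + \<i> * of_real pi / 2"
    using r by (simp add: Ln_times_ii Ln_of_real)
  moreover have "artanh x = ln r / 2"
    by (simp add: artanh_def r_def)
  ultimately show ?thesis
    by (simp add: strip_chart_def algebra_simps)
qed

lemma strip_translation_Schwarz:
  fixes G :: "complex \<Rightarrow> complex"
  assumes L: "L > 0" and hol: "G holomorphic_on {w. 0 < Re w \<and> Re w < L}"
    and neg: "\<And>w. 0 < Re w \<Longrightarrow> Re w < L \<Longrightarrow> Re (G w) < 0"
    and \<zeta>: "Re \<zeta> = L / 2"
  shows "norm (G (\<zeta> + \<i> * of_real \<tau>) - G \<zeta>)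
           \<le> \<bar>tanh (pi * \<tau> / (2 * L))\<bar> * norm (G (\<zeta> + \<i> * of_real \<tau>) + cnj (G \<zeta>))"
proof -
  define x where "x = - tanh (pi * \<tau> / (2 * L))"
  have x: "\<bar>x\<bar> < 1"
    using tanh_real_bounds by (simp add: x_def abs_less_iff)
  have "artanh x = - (pi * \<tau> / (2 * L))"
    using tanh_real_bounds by (simp add: x_def artanh_tanh_real abs_less_iff)
  then have "strip_chart L \<zeta> (of_real x) = \<zeta> + \<i> * of_real \<tau>"
    using strip_chart_of_real[OF x] L by simp
  moreover have chart_in: "strip_chart L \<zeta> z \<in> {w. 0 < Re w \<and> Re w < L}" if "norm z < 1" for z
    using strip_chart_in_strip[OF L that, of \<zeta>] \<zeta> by simp
  then have "(G \<circ> strip_chart L \<zeta>) holomorphic_on ball 0 1"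
    by (intro holomorphic_on_compose_gen[OF holomorphic_strip_chart hol]) auto
  moreover have "\<And>z. norm z < 1 \<Longrightarrow> Re ((G \<circ> strip_chart L \<zeta>) z) < 0"
    using chart_in neg by auto
  ultimately have "norm (G (\<zeta> + \<i> * of_real \<tau>) - G \<zeta>)
      \<le> norm (of_real x :: complex) * norm (G (\<zeta> + \<i> * of_real \<tau>) + cnj (G \<zeta>))"
    using Schwarz_Lemma_left_halfplane[of "G \<circ> strip_chart L \<zeta>" "of_real x"] x by simp
  then show ?thesis
    by (simp only: norm_of_real x_def abs_minus_cancel)
qed

lemma strip_log_period_bound:
  fixes G :: "complex \<Rightarrow> complex"
  assumes L: "L > 0" and hol: "G holomorphic_on {w. 0 < Re w \<and> Re w < L}"
    and neg: "\<And>w. 0 < Re w \<Longrightarrow> Re w < L \<Longrightarrow> Re (G w) < 0"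
    and \<zeta>: "Re \<zeta> = L / 2" and jump: "2 * pi \<le> norm (G (\<zeta> + 2 * pi * \<i>) - G \<zeta>)"
  shows "pi * (1 - tanh (pi\<^sup>2 / L)) / tanh (pi\<^sup>2 / L) \<le> - Re (G \<zeta>)"
proof -
  define \<beta> where "\<beta> = tanh (pi\<^sup>2 / L)"
  have \<beta>: "0 < \<beta>" "\<beta> < 1"
    using L tanh_real_lt_1 by (auto simp: \<beta>_def)
  define w w0 where "w = G (\<zeta> + 2 * pi * \<i>)" and "w0 = G \<zeta>"
  define X where "X = norm (w - w0)"
  have "X \<le> \<beta> * norm (w + cnj w0)"
    using strip_translation_Schwarz[OF L hol neg \<zeta>, of "2 * pi"] \<beta> L
    by (simp add: X_def w_def w0_def \<beta>_def power2_eq_square mult.commute)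
  also have "norm (w + cnj w0) \<le> X + norm (w0 + cnj w0)"
    using norm_triangle_ineq[of "w - w0" "w0 + cnj w0"] by (simp add: X_def)
  also have "norm (w0 + cnj w0) = - 2 * Re w0"
    using neg[of \<zeta>] L \<zeta> by (simp add: w0_def complex_add_cnj norm_mult)
  finally have "(1 - \<beta>) * X \<le> \<beta> * (- 2 * Re w0)"
    using \<beta> by (simp add: algebra_simps)
  moreover have "(1 - \<beta>) * (2 * pi) \<le> (1 - \<beta>) * X"
    using jump \<beta> by (intro mult_left_mono) (auto simp: X_def w_def w0_def)
  ultimately have "(1 - \<beta>) * (2 * pi) \<le> \<beta> * (- 2 * Re w0)"
    by linarith
  then show ?thesis
    using \<beta> by (simp add: \<beta>_def w0_def pos_divide_le_eq algebra_simps)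
qed

text \<open>\<open>tanh (pi\<^sup>2 / ln R)\<close> is the modulus of the point of the unit disc that
  \<open>strip_chart (ln R) \<zeta>\<close> sends to \<open>\<zeta> + 2 * pi * \<i>\<close>.\<close>

definition core_radius :: "real \<Rightarrow> real" where
  "core_radius R = exp (- (pi * (1 - tanh (pi\<^sup>2 / ln R)) / tanh (pi\<^sup>2 / ln R)))"

lemma core_radius_pos: "0 < core_radius R"
  by (simp add: core_radius_def)

lemma core_radius_less_1:
  assumes "R > 1"
  shows "core_radius R < 1"
  using assms tanh_real_lt_1[of "pi\<^sup>2 / ln R"] by (simp add: core_radius_def)

section \<open>The middle circle of a ring mapped into the punctured disc\<close>

lemma holomorphic_log_on_strip:
  assumes R: "R > 1" and hol: "\<phi> holomorphic_on ring 1 R"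
    and nz: "\<And>z. z \<in> ring 1 R \<Longrightarrow> \<phi> z \<noteq> 0"
  obtains G where "G holomorphic_on {w. 0 < Re w \<and> Re w < ln R}"
    and "\<And>w. 0 < Re w \<Longrightarrow> Re w < ln R \<Longrightarrow> exp (G w) = \<phi> (exp w)"
proof -
  define S where "S = {w. 0 < Re w \<and> Re w < ln R}"
  have S: "convex S" "open S"
    unfolding S_def by (rule convex_vertical_strip open_vertical_strip)+
  have exp_S: "exp w \<in> ring 1 R" if "w \<in> S" for w
    using exp_in_ring[of R w] that R by (simp add: S_def)
  have hol_S: "(\<phi> \<circ> exp) holomorphic_on S"
    using exp_S by (intro holomorphic_on_compose_gen[OF holomorphic_on_exp hol]) auto
  have nz_S: "\<And>w. w \<in> S \<Longrightarrow> (\<phi> \<circ> exp) w \<noteq> 0"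
    using nz exp_S by simp
  have "of_real (ln R / 2) \<in> S"
    using R by (simp add: S_def)
  then obtain G where "G holomorphic_on S" "\<And>w. w \<in> S \<Longrightarrow> exp (G w) = (\<phi> \<circ> exp) w"
    using holomorphic_logarithm_exists[OF S hol_S nz_S] by blast
  then show ?thesis
    using that by (simp add: S_def)
qed

lemma strip_log_period_eq_winding_number:
  assumes R: "R > 1" and hol: "\<phi> holomorphic_on ring 1 R"
    and nz: "\<And>z. z \<in> ring 1 R \<Longrightarrow> \<phi> z \<noteq> 0"
    and G: "continuous_on {w. 0 < Re w \<and> Re w < ln R} G"
      "\<And>w. 0 < Re w \<Longrightarrow> Re w < ln R \<Longrightarrow> exp (G w) = \<phi> (exp w)"
    and w: "0 < Re w" "Re w < ln R" and r: "0 < r" "r < ln R"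
  shows "G (w + 2 * pi * \<i>) - G w = 2 * pi * \<i> * winding_number (\<phi> \<circ> circlepath 0 (exp r)) 0"
proof -
  define S where "S = {w. 0 < Re w \<and> Re w < ln R}"
  have "(\<lambda>w. G (w + 2 * pi * \<i>) - G w) constant_on S"
  proof (rule exp_eq_imp_diff_constant_on)
    show "connected S"
      unfolding S_def by (intro convex_connected convex_vertical_strip)
    show "continuous_on S G"
      using G(1) by (simp add: S_def)
    have "(\<lambda>w. w + 2 * pi * \<i>) ` S \<subseteq> S"
      by (auto simp: S_def)
    then show "continuous_on S (\<lambda>w. G (w + 2 * pi * \<i>))"
      by (intro continuous_on_compose2[OF \<open>continuous_on S G\<close>] continuous_intros)
    fix w
    assume "w \<in> S"
    then show "exp (G (w + 2 * pi * \<i>)) = exp (G w)"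
      using G(2)[of w] G(2)[of "w + 2 * pi * \<i>"] by (simp add: S_def exp_add)
  qed
  then have jump_const: "G (w + 2 * pi * \<i>) - G w = G (of_real r + 2 * pi * \<i>) - G (of_real r)"
    using w r unfolding constant_on_def S_def by fastforce
  define p where "p = \<phi> \<circ> circlepath 0 (exp r)"
  define q where "q t = G (of_real r + 2 * pi * \<i> * of_real t)" for t
  have r_ring: "1 < exp r" "exp r < R"
    using r R exp_less_mono[of r "ln R"] by auto
  have "path p"
    unfolding p_def using ring_map_circlepath(1)[OF holomorphic_on_imp_continuous_on[OF hol] r_ring] .
  moreover have "0 \<notin> path_image p"
    unfolding p_def using ring_map_circlepath(3)[OF holomorphic_on_imp_continuous_on[OF hol] r_ring]
      nz r_ring by (auto simp: ring_def)
  moreover have "continuous_on {0..1} q"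
    unfolding q_def using r by (intro continuous_on_compose2[OF G(1)] continuous_intros) auto
  moreover have "exp (q t) = p t" for t
    using r G(2)[of "of_real r + 2 * pi * \<i> * of_real t"]
    by (simp add: p_def q_def circlepath exp_add exp_of_real)
  ultimately have "q 1 - q 0 = 2 * pi * \<i> * winding_number p 0"
    by (rule continuous_log_winding_number)
  then show ?thesis
    using jump_const by (simp add: p_def q_def)
qed

lemma log_of_ring_map_on_strip:
  assumes R: "R > 1" and hol: "\<phi> holomorphic_on ring 1 R"
    and into: "\<And>z. z \<in> ring 1 R \<Longrightarrow> \<phi> z \<in> ball 0 1 - {0}"
    and wn: "winding_number (\<phi> \<circ> circlepath 0 (exp (ln R / 2))) 0 \<noteq> 0"
  obtains G where "G holomorphic_on {w. 0 < Re w \<and> Re w < ln R}"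
    and "\<And>w. 0 < Re w \<Longrightarrow> Re w < ln R \<Longrightarrow> exp (G w) = \<phi> (exp w)"
    and "\<And>w. 0 < Re w \<Longrightarrow> Re w < ln R \<Longrightarrow> Re (G w) < 0"
    and "\<And>w. 0 < Re w \<Longrightarrow> Re w < ln R \<Longrightarrow> 2 * pi \<le> norm (G (w + 2 * pi * \<i>) - G w)"
proof -
  have nz: "\<And>z. z \<in> ring 1 R \<Longrightarrow> \<phi> z \<noteq> 0"
    using into by blast
  obtain G where hol_G: "G holomorphic_on {w. 0 < Re w \<and> Re w < ln R}"
    and exp_G: "\<And>w. 0 < Re w \<Longrightarrow> Re w < ln R \<Longrightarrow> exp (G w) = \<phi> (exp w)"
    using holomorphic_log_on_strip[OF R hol nz] by blast
  moreover have "Re (G w) < 0" if w: "0 < Re w" "Re w < ln R" for w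
  proof -
    have "norm (\<phi> (exp w)) < 1"
      using into[OF exp_in_ring[of R w]] R w by simp
    then have "exp (Re (G w)) < 1"
      by (simp only: norm_exp_eq_Re[symmetric] exp_G[OF w])
    then show ?thesis
      by simp
  qed
  moreover have "2 * pi \<le> norm (G (w + 2 * pi * \<i>) - G w)" if w: "0 < Re w" "Re w < ln R" for w
  proof -
    note circle = ring_map_circlepath[OF holomorphic_on_imp_continuous_on[OF hol] exp_half_ln_bounds[OF R]]
    have "0 \<notin> path_image (\<phi> \<circ> circlepath 0 (exp (ln R / 2)))"
      using into exp_half_ln_bounds[OF R] by (auto simp: circle(3) ring_def)
    then have "1 \<le> norm (winding_number (\<phi> \<circ> circlepath 0 (exp (ln R / 2))) 0)"
      by (rule norm_winding_number_ge_1[OF circle(1,2) _ wn])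
    moreover have "G (w + 2 * pi * \<i>) - G w = 2 * pi * \<i> * winding_number (\<phi> \<circ> circlepath 0 (exp (ln R / 2))) 0"
      using w R hol_G exp_G
      by (intro strip_log_period_eq_winding_number[OF R hol nz] holomorphic_on_imp_continuous_on) auto
    ultimately show ?thesis
      by (simp add: norm_mult)
  qed
  ultimately show ?thesis
    using that by blast
qed

lemma ring_map_middle_circle_bound:
  assumes R: "R > 1" and hol: "\<phi> holomorphic_on ring 1 R"
    and into: "\<And>z. z \<in> ring 1 R \<Longrightarrow> \<phi> z \<in> ball 0 1 - {0}"
    and wn: "winding_number (\<phi> \<circ> circlepath 0 (exp (ln R / 2))) 0 \<noteq> 0"
    and z: "norm z = exp (ln R / 2)"
  shows "norm (\<phi> z) \<le> core_radius R"
proof -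
  obtain G where hol_G: "G holomorphic_on {w. 0 < Re w \<and> Re w < ln R}"
    and exp_G: "\<And>w. 0 < Re w \<Longrightarrow> Re w < ln R \<Longrightarrow> exp (G w) = \<phi> (exp w)"
    and neg: "\<And>w. 0 < Re w \<Longrightarrow> Re w < ln R \<Longrightarrow> Re (G w) < 0"
    and jump: "\<And>w. 0 < Re w \<Longrightarrow> Re w < ln R \<Longrightarrow> 2 * pi \<le> norm (G (w + 2 * pi * \<i>) - G w)"
    using log_of_ring_map_on_strip[OF R hol into wn] by blast
  have L: "ln R > 0"
    using R by simp
  have "z \<noteq> 0"
    using z by auto
  then have \<zeta>: "Re (Ln z) = ln R / 2" "exp (Ln z) = z"
    using z by (simp_all add: Re_Ln)
  then have "pi * (1 - tanh (pi\<^sup>2 / ln R)) / tanh (pi\<^sup>2 / ln R) \<le> - Re (G (Ln z))"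
    using strip_log_period_bound[OF L hol_G neg \<zeta>(1)] jump[of "Ln z"] L by simp
  moreover have "norm (\<phi> z) = exp (Re (G (Ln z)))"
    using exp_G[of "Ln z"] \<zeta> L by (simp flip: norm_exp_eq_Re)
  ultimately show ?thesis
    by (simp add: core_radius_def)
qed

section \<open>The two ends of a conformal annulus\<close>

definition cluster_set :: "('a \<Rightarrow> 'b::topological_space) \<Rightarrow> (nat \<Rightarrow> 'a set) \<Rightarrow> 'b set" where
  "cluster_set f T = (\<Inter>n. closure (f ` T n))"

lemma closed_cluster_set: "closed (cluster_set f T)"
  by (auto simp: cluster_set_def)

lemma connected_cluster_set:
  fixes f :: "'a::topological_space \<Rightarrow> 'b::euclidean_space"
  assumes f: "continuous_on U f" "bounded (f ` U)"
    and T: "\<And>n. T n \<subseteq> U" "\<And>n. connected (T n)" "decseq T"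
  shows "connected (cluster_set f T)"
  unfolding cluster_set_def
proof (rule connected_nest)
  fix n
  show "compact (closure (f ` T n))"
    using bounded_subset[OF f(2) image_mono[OF T(1)]] by (simp add: compact_closure)
  show "connected (closure (f ` T n))"
    using connected_continuous_image[OF continuous_on_subset[OF f(1) T(1)] T(2)]
    by (rule connected_imp_connected_closure)
next
  fix m n :: nat
  assume "m \<le> n"
  then show "closure (f ` T n) \<subseteq> closure (f ` T m)"
    using T(3) by (intro closure_mono image_mono) (simp add: decseq_def)
qed

lemma cluster_set_subset_frontier:
  fixes f :: "'a::metric_space \<Rightarrow> 'b::metric_space"
  assumes A: "open A" and g: "continuous_on A g" "g ` A \<subseteq> U"
    and f: "f ` U = A" "\<And>z. z \<in> U \<Longrightarrow> g (f z) = z"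
    and T: "\<And>n. T n \<subseteq> U" "\<And>z. z \<in> U \<Longrightarrow> \<exists>n. z \<notin> closure (T n)"
  shows "cluster_set f T \<subseteq> frontier A"
proof -
  have "cluster_set f T \<subseteq> closure (f ` T 0)"
    by (auto simp: cluster_set_def)
  also have "\<dots> \<subseteq> closure A"
    using T(1)[of 0] f(1) by (intro closure_mono) blast
  finally have "cluster_set f T \<subseteq> closure A" .
  moreover have "w \<notin> A" if w: "w \<in> cluster_set f T" for w
  proof
    assume "w \<in> A"
    then obtain n where "g w \<notin> closure (T n)"
      using T(2) g(2) by blast
    then obtain \<epsilon> where \<epsilon>: "\<epsilon> > 0" "\<And>z. z \<in> T n \<Longrightarrow> \<epsilon> \<le> dist z (g w)"
      unfolding closure_approachable by (auto simp: not_less)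
    obtain \<delta> where \<delta>: "\<delta> > 0" "\<And>w'. w' \<in> A \<Longrightarrow> dist w' w < \<delta> \<Longrightarrow> dist (g w') (g w) < \<epsilon>"
      using g(1) \<open>w \<in> A\<close> \<epsilon>(1) unfolding continuous_on_iff by meson
    have "w \<in> closure (f ` T n)"
      using w by (auto simp: cluster_set_def)
    then obtain z where z: "z \<in> T n" "dist (f z) w < \<delta>"
      using \<delta>(1) unfolding closure_approachable by blast
    have "f z \<in> A" "g (f z) = z"
      using z(1) T(1) f by auto
    then have "dist z (g w) < \<epsilon>"
      using \<delta>(2) z(2) by metis
    then show False
      using \<epsilon>(2)[OF z(1)] by simp
  qed
  ultimately show ?thesis
    using A by (auto simp: frontier_def interior_open)
qed

lemma frontier_image_subset_closure_image_Diff: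
  assumes A: "open A" and f: "f ` U = A" and K: "K \<subseteq> U" "closed (f ` K)"
  shows "frontier A \<subseteq> closure (f ` (U - K))"
proof
  fix b
  assume b: "b \<in> frontier A"
  have "f ` U = f ` K \<union> f ` (U - K)"
    using K(1) by blast
  then have "b \<in> f ` K \<union> closure (f ` (U - K))"
    using b f K(2) by (simp add: frontier_def closure_Un closure_closed)
  moreover have "b \<notin> f ` K"
    using b A f K(1) by (auto simp: frontier_def interior_open)
  ultimately show "b \<in> closure (f ` (U - K))"
    by blast
qed

lemma frontier_ring_image_near_ends:
  fixes \<phi> :: "complex \<Rightarrow> complex"
  assumes A: "open A" and \<phi>: "continuous_on (ring 1 R) \<phi>" "\<phi> ` ring 1 R = A" and e: "e > 0"
  shows "frontier A \<subseteq> closure (\<phi> ` ring 1 (1 + e)) \<union> closure (\<phi> ` ring (R - e) R)"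
proof -
  define M where "M = cball (0::complex) (R - e) \<inter> - ball 0 (1 + e)"
  have M: "M \<subseteq> ring 1 R"
    using e by (auto simp: M_def ring_def)
  have "compact M"
    unfolding M_def by (intro compact_Int_closed compact_cball closed_Compl open_ball)
  then have "compact (\<phi> ` M)"
    using continuous_on_subset[OF \<phi>(1) M] by (rule compact_continuous_image[rotated])
  then have "frontier A \<subseteq> closure (\<phi> ` (ring 1 R - M))"
    by (intro frontier_image_subset_closure_image_Diff[OF A \<phi>(2) M] compact_imp_closed)
  moreover have "ring 1 R - M \<subseteq> ring 1 (1 + e) \<union> ring (R - e) R"
    by (auto simp: M_def ring_def)
  then have "closure (\<phi> ` (ring 1 R - M)) \<subseteq> closure (\<phi> ` ring 1 (1 + e) \<union> \<phi> ` ring (R - e) R)"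
    by (intro closure_mono) blast
  ultimately show ?thesis
    by (simp add: closure_Un)
qed

definition inner_collar :: "real \<Rightarrow> nat \<Rightarrow> complex set" where
  "inner_collar R n = ring 1 (1 + (R - 1) / (real n + 2))"

definition outer_collar :: "real \<Rightarrow> nat \<Rightarrow> complex set" where
  "outer_collar R n = ring (R - (R - 1) / (real n + 2)) R"

lemma collars_subset_ring:
  assumes "R > 1"
  shows "inner_collar R n \<subseteq> ring 1 R" "outer_collar R n \<subseteq> ring 1 R"
proof -
  define w where "w = (R - 1) / (real n + 2)"
  have "w \<le> (R - 1) / 2"
    unfolding w_def using assms by (intro divide_left_mono) auto
  moreover have "0 < w"
    using assms by (simp add: w_def)
  ultimately show "inner_collar R n \<subseteq> ring 1 R" "outer_collar R n \<subseteq> ring 1 R"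
    unfolding inner_collar_def outer_collar_def w_def[symmetric] by (auto simp: ring_def)
qed

lemma decseq_collars:
  assumes "R > 1"
  shows "decseq (inner_collar R)" "decseq (outer_collar R)"
proof -
  have "(R - 1) / (real n + 2) \<le> (R - 1) / (real m + 2)" if "m \<le> n" for m n
    using assms that by (intro divide_left_mono) auto
  then show "decseq (inner_collar R)" "decseq (outer_collar R)"
    by (force simp: decseq_def inner_collar_def outer_collar_def ring_def)+
qed

lemma collars_eventually_avoid:
  assumes z: "z \<in> ring 1 R"
  shows "\<exists>n. z \<notin> closure (inner_collar R n)" "\<exists>n. z \<notin> closure (outer_collar R n)"
proof -
  have small: "\<exists>n. (R - 1) / (real n + 2) < \<epsilon>" if "\<epsilon> > 0" for \<epsilon>
  proof -
    obtain n :: nat where "(R - 1) / \<epsilon> < real n"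
      using reals_Archimedean2 by blast
    then have "(R - 1) / (real n + 2) < \<epsilon>"
      using that by (simp add: divide_less_eq mult.commute distrib_left)
    then show ?thesis ..
  qed
  obtain n where n: "(R - 1) / (real n + 2) < norm z - 1"
    using small[of "norm z - 1"] z by (auto simp: ring_def)
  have "closure (inner_collar R n) \<subseteq> cball 0 (1 + (R - 1) / (real n + 2))"
    by (intro closure_minimal) (auto simp: inner_collar_def ring_def)
  then show "\<exists>n. z \<notin> closure (inner_collar R n)"
    using n by auto
  obtain k where k: "(R - 1) / (real k + 2) < R - norm z"
    using small[of "R - norm z"] z by (auto simp: ring_def)
  have "closure (outer_collar R k) \<subseteq> - ball 0 (R - (R - 1) / (real k + 2))"
    by (intro closure_minimal) (auto simp: outer_collar_def ring_def)
  then show "\<exists>n. z \<notin> closure (outer_collar R n)"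
    using k by auto
qed

lemma frontier_ring_image_subset_ends:
  fixes \<phi> :: "complex \<Rightarrow> complex"
  assumes R: "R > 1" and A: "open A" and \<phi>: "continuous_on (ring 1 R) \<phi>" "\<phi> ` ring 1 R = A"
  shows "frontier A \<subseteq> cluster_set \<phi> (inner_collar R) \<union> cluster_set \<phi> (outer_collar R)"
proof
  fix b
  assume b: "b \<in> frontier A"
  show "b \<in> cluster_set \<phi> (inner_collar R) \<union> cluster_set \<phi> (outer_collar R)"
  proof (rule ccontr)
    assume "b \<notin> cluster_set \<phi> (inner_collar R) \<union> cluster_set \<phi> (outer_collar R)"
    then obtain m k where "b \<notin> closure (\<phi> ` inner_collar R m)" "b \<notin> closure (\<phi> ` outer_collar R k)"
      by (auto simp: cluster_set_def)
    moreover have "inner_collar R (max m k) \<subseteq> inner_collar R m" "outer_collar R (max m k) \<subseteq> outer_collar R k"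
      using decseq_collars[OF R] by (simp_all add: decseq_def)
    then have "closure (\<phi> ` inner_collar R (max m k)) \<subseteq> closure (\<phi> ` inner_collar R m)"
      "closure (\<phi> ` outer_collar R (max m k)) \<subseteq> closure (\<phi> ` outer_collar R k)"
      by (meson closure_mono image_mono)+
    moreover have "(R - 1) / (real (max m k) + 2) > 0"
      using R by simp
    ultimately show False
      using frontier_ring_image_near_ends[OF A \<phi>] b unfolding inner_collar_def outer_collar_def by blast
  qed
qed

lemma frontier_ring_image_two_ends:
  fixes \<phi> \<psi> :: "complex \<Rightarrow> complex"
  assumes R: "R > 1" and A: "open A" "bounded A"
    and \<phi>: "continuous_on (ring 1 R) \<phi>" "\<phi> ` ring 1 R = A"
    and \<psi>: "continuous_on A \<psi>" "\<psi> ` A \<subseteq> ring 1 R"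
    and inv: "\<And>z. z \<in> ring 1 R \<Longrightarrow> \<psi> (\<phi> z) = z"
  obtains E1 E2 where "closed E1" "connected E1" "closed E2" "connected E2" "frontier A = E1 \<union> E2"
proof
  have bd: "bounded (\<phi> ` ring 1 R)"
    using \<phi>(2) A(2) by simp
  show "connected (cluster_set \<phi> (inner_collar R))" "connected (cluster_set \<phi> (outer_collar R))"
    using collars_subset_ring[OF R] decseq_collars[OF R]
    by (intro connected_cluster_set[OF \<phi>(1) bd]; simp add: inner_collar_def outer_collar_def connected_ring)+
  have "cluster_set \<phi> (inner_collar R) \<subseteq> frontier A" "cluster_set \<phi> (outer_collar R) \<subseteq> frontier A"
    using collars_subset_ring[OF R] collars_eventually_avoid
    by (intro cluster_set_subset_frontier[OF A(1) \<psi> \<phi>(2) inv]; simp)+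
  then show "frontier A = cluster_set \<phi> (inner_collar R) \<union> cluster_set \<phi> (outer_collar R)"
    using frontier_ring_image_subset_ends[OF R A(1) \<phi>] by blast
qed (rule closed_cluster_set)+

lemma component_of_union_two_connected:
  assumes S: "S = E1 \<union> E2" and E: "closed E1" "closed E2" "connected E1" "connected E2"
    and K: "K \<in> components S"
  obtains P where "connected P" "P \<subseteq> S" "S - K \<subseteq> P"
proof -
  have "K \<noteq> {}" "K \<subseteq> S" "connected K"
    and K_max: "\<And>D. D \<noteq> {} \<Longrightarrow> K \<subseteq> D \<Longrightarrow> D \<subseteq> S \<Longrightarrow> connected D \<Longrightarrow> D = K"
    using K by (auto simp: in_components_maximal)
  show ?thesis
  proof (cases "E1 \<inter> E2 = {}")
    case False
    then have "S = K"
      using S E \<open>K \<noteq> {}\<close> \<open>K \<subseteq> S\<close> by (intro K_max) (auto simp: connected_Un)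
    then show ?thesis
      using that[of "{}"] by simp
  next
    case True
    then have "K \<subseteq> E1 \<or> K \<subseteq> E2"
      using \<open>connected K\<close> \<open>K \<subseteq> S\<close> S E(1,2) unfolding connected_closed by blast
    then show ?thesis
    proof
      assume "K \<subseteq> E1"
      then have "E1 = K"
        using K_max E(3) S \<open>K \<noteq> {}\<close> by blast
      then show ?thesis
        using that[of E2] E(4) S by blast
    next
      assume "K \<subseteq> E2"
      then have "E2 = K"
        using K_max E(4) S \<open>K \<noteq> {}\<close> by blast
      then show ?thesis
        using that[of E1] E(3) S by blast
    qed
  qed
qed

lemma winding_number_constant_off_domain:
  fixes \<gamma> :: "real \<Rightarrow> complex"
  assumes \<gamma>: "path \<gamma>" "pathfinish \<gamma> = pathstart \<gamma>" "path_image \<gamma> \<subseteq> A"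
    and A: "open A" "A \<subseteq> B" and B: "convex B"
    and P: "connected P" "P \<subseteq> frontier A" "frontier A \<inter> B \<subseteq> P"
  obtains m where "\<And>y. y \<in> B \<Longrightarrow> y \<notin> A \<Longrightarrow> winding_number \<gamma> y = m"
proof -
  have "P \<inter> path_image \<gamma> = {}"
    using P(2) \<gamma>(3) A(1) by (auto simp: frontier_def interior_open)
  then obtain m where m: "\<And>y. y \<in> P \<Longrightarrow> winding_number \<gamma> y = m"
    using winding_number_constant[OF \<gamma>(1,2) P(1)] unfolding constant_on_def by blast
  have "winding_number \<gamma> y = m" if y: "y \<in> B" "y \<notin> A" for y
  proof -
    obtain y' where "y' \<in> frontier A" "y' \<in> B" "winding_number \<gamma> y = winding_number \<gamma> y'"
      using winding_number_eq_at_frontier_point[OF \<gamma> A B y] by blast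
    then show ?thesis
      using m P(3) by blast
  qed
  then show ?thesis
    using that by blast
qed

lemma ring_image_winds_around_complement:
  fixes \<phi> \<psi> :: "complex \<Rightarrow> complex"
  assumes R: "R > 1" and c: "1 < c" "c < R"
    and A: "open A" "A \<subseteq> ball 0 1"
    and hol: "\<phi> holomorphic_on ring 1 R" "\<psi> holomorphic_on A"
    and im: "\<phi> ` ring 1 R = A" "\<psi> ` A = ring 1 R" and inv: "\<And>z. z \<in> ring 1 R \<Longrightarrow> \<psi> (\<phi> z) = z"
    and comp: "sphere 0 1 \<in> components (frontier A)"
    and x: "x \<in> ball 0 1" "x \<notin> A"
  shows "winding_number (\<phi> \<circ> circlepath 0 c) x \<noteq> 0"
proof -
  define \<Gamma> where "\<Gamma> = \<phi> \<circ> circlepath 0 c"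
  have cont: "continuous_on (ring 1 R) \<phi>" "continuous_on A \<psi>"
    using hol holomorphic_on_imp_continuous_on by blast+
  have circle: "path_image (circlepath 0 c) \<subseteq> ring 1 R"
    using c by (auto simp: ring_def)
  have \<Gamma>: "path \<Gamma>" "pathfinish \<Gamma> = pathstart \<Gamma>" "path_image \<Gamma> \<subseteq> A"
    using ring_map_circlepath[OF cont(1) c] circle im(1) by (auto simp: \<Gamma>_def path_image_compose)
  have "valid_path \<Gamma>"
    unfolding \<Gamma>_def by (rule valid_path_compose_holomorphic[OF valid_path_circlepath hol(1) open_ring circle])
  obtain E1 E2 where "closed E1" "connected E1" "closed E2" "connected E2" "frontier A = E1 \<union> E2"
    using frontier_ring_image_two_ends[OF R A(1) _ cont(1) im(1) cont(2) _ inv] A(2) im(2)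
    by (metis bounded_ball bounded_subset order_refl)
  then obtain P where P: "connected P" "P \<subseteq> frontier A" "frontier A - sphere 0 1 \<subseteq> P"
    using component_of_union_two_connected comp by metis
  then have "frontier A \<inter> ball 0 1 \<subseteq> P"
    by auto
  then obtain m where wn_m: "\<And>y. y \<in> ball 0 1 \<Longrightarrow> y \<notin> A \<Longrightarrow> winding_number \<Gamma> y = m"
    using winding_number_constant_off_domain[OF \<Gamma> A convex_ball P(1,2)] by blast
  have "\<psi> \<circ> \<Gamma> = circlepath 0 c"
  proof
    fix t
    have "circlepath 0 c t \<in> ring 1 R"
      using c by (simp add: ring_def circlepath norm_mult)
    then show "(\<psi> \<circ> \<Gamma>) t = circlepath 0 c t"
      by (simp add: \<Gamma>_def inv)
  qed
  then have "winding_number (\<psi> \<circ> \<Gamma>) 0 \<noteq> 0"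
    using c winding_number_circlepath_centre[of c 0] by simp
  then obtain w where w: "w \<notin> A" "winding_number \<Gamma> w \<noteq> 0"
    using exists_winding_number_nonzero_outside[OF A(1) hol(2) _ \<open>valid_path \<Gamma>\<close> \<Gamma>(2,3)] im(2)
    by (force simp: ring_def)
  have "w \<in> ball 0 1"
    using winding_number_zero_outside[OF \<Gamma>(1) convex_ball \<Gamma>(2)] \<Gamma>(3) A(2) w by blast
  then have "m \<noteq> 0"
    using wn_m w by metis
  then show ?thesis
    using wn_m[OF x] by (simp add: \<Gamma>_def)
qed

lemma annulus_contains_core_collar:
  assumes R: "R > 1" and A: "open A" "A \<subseteq> ball 0 1 - {0}"
    and bih: "biholomorphic A (ring 1 R)" and comp: "sphere 0 1 \<in> components (frontier A)"
  shows "ring (core_radius R) 1 \<subseteq> A"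
proof
  fix x
  assume x: "x \<in> ring (core_radius R) 1"
  obtain \<psi> \<phi> where hol: "\<phi> holomorphic_on ring 1 R" "\<psi> holomorphic_on A"
    and im: "\<phi> ` ring 1 R = A" "\<psi> ` A = ring 1 R" and inv: "\<And>z. z \<in> ring 1 R \<Longrightarrow> \<psi> (\<phi> z) = z"
    using bih unfolding biholomorphic_def by metis
  define c where "c = exp (ln R / 2)"
  have c: "1 < c" "c < R"
    using exp_half_ln_bounds[OF R] by (simp_all add: c_def)
  have winds: "winding_number (\<phi> \<circ> circlepath 0 c) y \<noteq> 0" if "y \<in> ball 0 1" "y \<notin> A" for y
    using ring_image_winds_around_complement[OF R c A(1) _ hol im inv comp that] A(2) by blast
  have "\<phi> ` sphere 0 c \<subseteq> cball 0 (core_radius R)"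
  proof
    fix w
    assume "w \<in> \<phi> ` sphere 0 c"
    then obtain z where "norm z = exp (ln R / 2)" "w = \<phi> z"
      by (auto simp: c_def)
    moreover have "winding_number (\<phi> \<circ> circlepath 0 (exp (ln R / 2))) 0 \<noteq> 0"
      using winds[of 0] A(2) by (auto simp: c_def)
    ultimately show "w \<in> cball 0 (core_radius R)"
      using ring_map_middle_circle_bound[OF R hol(1)] im(1) A(2) by force
  qed
  moreover note circle = ring_map_circlepath[OF holomorphic_on_imp_continuous_on[OF hol(1)] c]
  ultimately have "winding_number (\<phi> \<circ> circlepath 0 c) x = 0"
    using x by (intro winding_number_zero_outside[OF circle(1) convex_cball circle(2)])
      (auto simp: circle(3) ring_def)
  then show "x \<in> A"
    using winds x core_radius_pos[of R] by (force simp: ring_def)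
qed

lemma norm_cyl_point: "norm (exp (\<i> * (of_real \<theta> + \<i> * of_real t))) = exp (- t)"
  by (simp add: algebra_simps)

lemma boundary0_eq_sphere: "boundary0 = sphere 0 1"
proof
  show "boundary0 \<subseteq> sphere 0 1"
    by (auto simp: boundary0_def)
  show "sphere 0 1 \<subseteq> boundary0"
  proof
    fix z :: complex
    assume z: "z \<in> sphere 0 1"
    then have "z \<noteq> 0"
      by auto
    then have "exp (\<i> * of_real (Arg z)) = z"
      using cis_Arg[of z] z by (simp add: cis_conv_exp sgn_div_norm)
    then show "z \<in> boundary0"
      unfolding boundary0_def by (metis (mono_tags, lifting) mem_Collect_eq)
  qed
qed

lemma cyl_Z_subset_punctured_cball: "cyl_Z l \<subseteq> cball 0 1 - {0}"
  by (auto simp: cyl_Z_def norm_cyl_point simp del: norm_exp_eq_Re)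

lemma cyl_Z_subset_sphere_ring:
  assumes "r < exp (- a)"
  shows "cyl_Z (ereal a) \<subseteq> sphere 0 1 \<union> ring r 1"
proof
  fix x
  assume "x \<in> cyl_Z (ereal a)"
  then obtain \<theta> t where x: "x = exp (\<i> * (of_real \<theta> + \<i> * of_real t))" and t: "0 \<le> t" "t \<le> a"
    by (auto simp: cyl_Z_def)
  have "norm x = exp (- t)"
    by (simp only: x norm_cyl_point)
  moreover have "r < exp (- t)"
    using assms t by (meson exp_le_cancel_iff le_less_trans neg_le_iff_le not_less)
  ultimately show "x \<in> sphere 0 1 \<union> ring r 1"
    using t by (cases "t = 0") (auto simp: ring_def)
qed

lemma open_subset_cyl_Z_imp_subset_punctured_ball:
  assumes "open A" "A \<subseteq> cyl_Z l"
  shows "A \<subseteq> ball 0 1 - {0}"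
proof -
  have "A \<subseteq> cball 0 1 - {0}"
    using assms(2) cyl_Z_subset_punctured_cball by blast
  then show ?thesis
    using interior_maximal[of A "cball 0 1"] assms(1) by auto
qed

theorem lemma4p1:
  fixes R :: real
  assumes "R > 1"
  shows "\<exists>a>0. \<forall>(l::ereal) (A::complex set).
           0 < l \<longrightarrow> A \<subseteq> cyl_Z l \<longrightarrow> is_annulus A \<longrightarrow>
           has_conformal_radius A R \<longrightarrow> adjacent A boundary0 \<longrightarrow>
           cyl_Z (ereal a) \<subseteq> A \<union> boundary0"
proof (intro exI conjI allI impI)
  define \<rho> where "\<rho> = core_radius R"
  have \<rho>: "0 < \<rho>" "\<rho> < 1"
    using core_radius_pos core_radius_less_1[OF assms] by (simp_all add: \<rho>_def)
  show "- ln \<rho> / 2 > 0"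
    using \<rho> by simp
  fix l :: ereal and A :: "complex set"
  assume sub: "A \<subseteq> cyl_Z l" and ann: "is_annulus A"
    and conf: "has_conformal_radius A R" and adj: "adjacent A boundary0"
  have "open A"
    using ann by (simp add: is_annulus_def)
  then have collar: "ring \<rho> 1 \<subseteq> A"
    unfolding \<rho>_def
    using annulus_contains_core_collar[OF assms] open_subset_cyl_Z_imp_subset_punctured_ball[OF _ sub] conf adj
    by (simp add: has_conformal_radius_def adjacent_def boundary0_eq_sphere)
  have "\<rho> = exp (ln \<rho>)"
    using \<rho> by simp
  also have "\<dots> < exp (- (- ln \<rho> / 2))"
    using \<rho> by (subst exp_less_cancel_iff) simp
  finally have "cyl_Z (ereal (- ln \<rho> / 2)) \<subseteq> sphere 0 1 \<union> ring \<rho> 1"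
    by (rule cyl_Z_subset_sphere_ring)
  then show "cyl_Z (ereal (- ln \<rho> / 2)) \<subseteq> A \<union> boundary0"
    using collar by (auto simp: boundary0_eq_sphere)
qed

end
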